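(* Let $G$ be a graph with no induced $P_7$, $C_4$, $C_6$ or $C_7$. Let $C=v_1-v_2-v_3-v_4-v_5-v_1$ be an induced $C_5$ of $G$ and let $K$ be a component of $G[S_0]$ that is not a clique. Then, with indices modulo $5$: (1) every vertex in $N(K)\cap S(v_{i-2},v_{i+2})$ is complete to $K$; (2) $N(K)\cap S(v_{i-1},v_i,v_{i+1})$ or $N(K)\cap S(v_{i+1},v_{i+2},v_{i+3})$ is empty; (3) if $p,q\in N(K)$ are non-adjacent, then $p\in S(v_{i-1},v_i,v_{i+1})$ and $q\in S(v_{i-2},v_{i+2})$ for some $i$ (after possibly swapping $p$ and $q$); (4) $N(K)$ cannot contain four vertices $p,p',q,q'$ with $p\in S(v_{i-1},v_i,v_{i+1})$, $q\in S(v_{i-2},v_{i+2})$, $p'\in S(v_i,v_{i+1},v_{i+2})$ and $q'\in S(v_{i-2},v_{i-1})$.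
   Context: For $X\subseteq V(C)$, $S(X)$ is the set of vertices $v\in V(G)\setminus V(C)$ with $N(v)\cap V(C)=X$ (set braces are omitted, e.g. $S(v_1,v_2)=S(\{v_1,v_2\})$); $S_0=S(\emptyset)$. $N(K)$ is the set of vertices outside $K$ having a neighbor in $K$. *)

theory Defs
  imports Main
begin

definition graph :: "'a set \<Rightarrow> ('a \<Rightarrow> 'a \<Rightarrow> bool) \<Rightarrow> bool" where
  "graph V E \<longleftrightarrow> finite V \<and> (\<forall>x y. E x y \<longrightarrow> E y x) \<and> (\<forall>x. \<not> E x x)
     \<and> (\<forall>x y. E x y \<longrightarrow> x \<in> V \<and> y \<in> V)"

definition induced_path :: "'a set \<Rightarrow> ('a \<Rightarrow> 'a \<Rightarrow> bool) \<Rightarrow> nat \<Rightarrow> (nat \<Rightarrow> 'a) \<Rightarrow> bool" where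
  "induced_path V E k f \<longleftrightarrow> inj_on f {0..<k} \<and> f ` {0..<k} \<subseteq> V \<and>
     (\<forall>i<k. \<forall>j<k. E (f i) (f j) \<longleftrightarrow> (j = i + 1 \<or> i = j + 1))"

definition induced_cycle :: "'a set \<Rightarrow> ('a \<Rightarrow> 'a \<Rightarrow> bool) \<Rightarrow> nat \<Rightarrow> (nat \<Rightarrow> 'a) \<Rightarrow> bool" where
  "induced_cycle V E k f \<longleftrightarrow> inj_on f {0..<k} \<and> f ` {0..<k} \<subseteq> V \<and>
     (\<forall>i<k. \<forall>j<k. E (f i) (f j) \<longleftrightarrow> (j = (i + 1) mod k \<or> i = (j + 1) mod k))"

definition Sset :: "'a set \<Rightarrow> ('a \<Rightarrow> 'a \<Rightarrow> bool) \<Rightarrow> 'a set \<Rightarrow> 'a set \<Rightarrow> 'a set" where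
  "Sset V E C X = {v \<in> V - C. {u \<in> C. E v u} = X}"

definition nbhd :: "'a set \<Rightarrow> ('a \<Rightarrow> 'a \<Rightarrow> bool) \<Rightarrow> 'a set \<Rightarrow> 'a set" where
  "nbhd V E K = {v \<in> V - K. \<exists>u\<in>K. E v u}"

definition component_of :: "('a \<Rightarrow> 'a \<Rightarrow> bool) \<Rightarrow> 'a set \<Rightarrow> 'a set \<Rightarrow> bool" where
  "component_of E A K \<longleftrightarrow>
     (\<exists>x\<in>A. K = {y \<in> A. (\<lambda>a b. E a b \<and> a \<in> A \<and> b \<in> A)\<^sup>*\<^sup>* x y})"

definition is_clique :: "('a \<Rightarrow> 'a \<Rightarrow> bool) \<Rightarrow> 'a set \<Rightarrow> bool" where
  "is_clique E K \<longleftrightarrow> (\<forall>x\<in>K. \<forall>y\<in>K. x \<noteq> y \<longrightarrow> E x y)"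

end

theory Submission
  imports Defs
begin

text \<open>
  Every claim is proved by exhibiting an induced C4, C6, C7 or P7 built from vertices of N(K),
  a chordless path through K (which has no neighbour on C) and a path of C. The central step is
  that two non-adjacent vertices p, q of N(K) have a common neighbour in K: otherwise a shortest
  p-q path through K, with two, three or at least four vertices, closes such a configuration
  with C. Given a common neighbour u, the neighbourhoods of p and q on C are disjoint
  intervals, and the holes through p - u - q leave only an interval of three vertices opposite
  the complementary edge; this is (3). Claim (1) is the P7 leaving K through a vertex with two
  neighbours on C, and (2) and (4) follow because vertices of N(K) with a common neighbour on C
  are adjacent, which closes a C4.
\<close>

lemma graph_sym: "graph V E \<Longrightarrow> E x y \<longleftrightarrow> E y x"
  unfolding graph_def by blast

lemma graph_irrefl: "graph V E \<Longrightarrow> \<not> E x x"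
  unfolding graph_def by blast

lemma all_less_4: "(\<forall>i<4. P i) \<longleftrightarrow> P 0 \<and> P 1 \<and> P 2 \<and> P (3::nat)"
  by (simp add: numeral_eq_Suc All_less_Suc conj_ac)

lemma all_less_6: "(\<forall>i<6. P i) \<longleftrightarrow> P 0 \<and> P 1 \<and> P 2 \<and> P 3 \<and> P (4::nat) \<and> P 5"
  by (simp add: numeral_eq_Suc All_less_Suc conj_ac)

lemma all_less_7: "(\<forall>i<7. P i) \<longleftrightarrow> P 0 \<and> P 1 \<and> P 2 \<and> P 3 \<and> P (4::nat) \<and> P 5 \<and> P 6"
  by (simp add: numeral_eq_Suc All_less_Suc conj_ac)

lemma induced_path_of_list:
  assumes "length xs = n" "set xs \<subseteq> V" "distinct xs"
    and "\<forall>i<n. \<forall>j<n. E (xs ! i) (xs ! j) \<longleftrightarrow> j = i + 1 \<or> i = j + 1"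
  shows "induced_path V E n ((!) xs)"
  using assms by (simp add: induced_path_def inj_on_nth nth_image)

lemma induced_cycle_of_list:
  assumes "length xs = n" "set xs \<subseteq> V" "distinct xs"
    and "\<forall>i<n. \<forall>j<n. E (xs ! i) (xs ! j) \<longleftrightarrow> j = (i + 1) mod n \<or> i = (j + 1) mod n"
  shows "induced_cycle V E n ((!) xs)"
  using assms by (simp add: induced_cycle_def inj_on_nth nth_image)

lemma induced_path_7I:
  assumes G: "graph V E" and V: "{x0, x1, x2, x3, x4, x5, x6} \<subseteq> V"
    and "E x0 x1" "E x1 x2" "E x2 x3" "E x3 x4" "E x4 x5" "E x5 x6"
    and "\<not> E x0 x2" "\<not> E x0 x3" "\<not> E x0 x4" "\<not> E x0 x5" "\<not> E x0 x6" "\<not> E x1 x3"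
      "\<not> E x1 x4" "\<not> E x1 x5" "\<not> E x1 x6" "\<not> E x2 x4" "\<not> E x2 x5" "\<not> E x2 x6"
      "\<not> E x3 x5" "\<not> E x3 x6" "\<not> E x4 x6"
  shows "\<exists>f. induced_path V E 7 f"
proof -
  let ?xs = "[x0, x1, x2, x3, x4, x5, x6]"
  have "distinct ?xs"
    using assms(3-) graph_irrefl[OF G] by (auto simp: graph_sym[OF G])
  moreover have "\<forall>i<7. \<forall>j<7. E (?xs ! i) (?xs ! j) \<longleftrightarrow> j = i + 1 \<or> i = j + 1"
    using assms(3-) graph_irrefl[OF G] unfolding all_less_7 by (simp add: graph_sym[OF G])
  ultimately have "induced_path V E 7 ((!) ?xs)"
    using V by (intro induced_path_of_list) auto
  then show ?thesis by blast
qed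

lemma induced_cycle_4I:
  assumes G: "graph V E" and V: "{x0, x1, x2, x3} \<subseteq> V" and "x0 \<noteq> x2" "x1 \<noteq> x3"
    and "E x0 x1" "E x1 x2" "E x2 x3" "E x3 x0"
    and "\<not> E x0 x2" "\<not> E x1 x3"
  shows "\<exists>f. induced_cycle V E 4 f"
proof -
  let ?xs = "[x0, x1, x2, x3]"
  have "distinct ?xs"
    using assms(3-) graph_irrefl[OF G] by (auto simp: graph_sym[OF G])
  moreover have "\<forall>i<4. \<forall>j<4. E (?xs ! i) (?xs ! j) \<longleftrightarrow> j = (i + 1) mod 4 \<or> i = (j + 1) mod 4"
    using assms(3-) graph_irrefl[OF G] unfolding all_less_4 by (simp add: graph_sym[OF G])
  ultimately have "induced_cycle V E 4 ((!) ?xs)"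
    using V by (intro induced_cycle_of_list) auto
  then show ?thesis by blast
qed

lemma induced_cycle_6I:
  assumes G: "graph V E" and V: "{x0, x1, x2, x3, x4, x5} \<subseteq> V"
    and "E x0 x1" "E x1 x2" "E x2 x3" "E x3 x4" "E x4 x5" "E x5 x0"
    and "\<not> E x0 x2" "\<not> E x0 x3" "\<not> E x0 x4" "\<not> E x1 x3" "\<not> E x1 x4" "\<not> E x1 x5"
      "\<not> E x2 x4" "\<not> E x2 x5" "\<not> E x3 x5"
  shows "\<exists>f. induced_cycle V E 6 f"
proof -
  let ?xs = "[x0, x1, x2, x3, x4, x5]"
  have "distinct ?xs"
    using assms(3-) graph_irrefl[OF G] by (auto simp: graph_sym[OF G])
  moreover have "\<forall>i<6. \<forall>j<6. E (?xs ! i) (?xs ! j) \<longleftrightarrow> j = (i + 1) mod 6 \<or> i = (j + 1) mod 6"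
    using assms(3-) graph_irrefl[OF G] unfolding all_less_6 by (simp add: graph_sym[OF G])
  ultimately have "induced_cycle V E 6 ((!) ?xs)"
    using V by (intro induced_cycle_of_list) auto
  then show ?thesis by blast
qed

lemma induced_cycle_7I:
  assumes G: "graph V E" and V: "{x0, x1, x2, x3, x4, x5, x6} \<subseteq> V"
    and "E x0 x1" "E x1 x2" "E x2 x3" "E x3 x4" "E x4 x5" "E x5 x6" "E x6 x0"
    and "\<not> E x0 x2" "\<not> E x0 x3" "\<not> E x0 x4" "\<not> E x0 x5" "\<not> E x1 x3" "\<not> E x1 x4"
      "\<not> E x1 x5" "\<not> E x1 x6" "\<not> E x2 x4" "\<not> E x2 x5" "\<not> E x2 x6" "\<not> E x3 x5"
      "\<not> E x3 x6" "\<not> E x4 x6"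
  shows "\<exists>f. induced_cycle V E 7 f"
proof -
  let ?xs = "[x0, x1, x2, x3, x4, x5, x6]"
  have "distinct ?xs"
    using assms(3-) graph_irrefl[OF G] by (auto simp: graph_sym[OF G])
  moreover have "\<forall>i<7. \<forall>j<7. E (?xs ! i) (?xs ! j) \<longleftrightarrow> j = (i + 1) mod 7 \<or> i = (j + 1) mod 7"
    using assms(3-) graph_irrefl[OF G] unfolding all_less_7 by (simp add: graph_sym[OF G])
  ultimately have "induced_cycle V E 7 ((!) ?xs)"
    using V by (intro induced_cycle_of_list) auto
  then show ?thesis by blast
qed

section \<open>Chordless paths inside a component\<close>

lemma component_of_subset: "component_of E A K \<Longrightarrow> K \<subseteq> A"
  unfolding component_of_def by blast

lemma component_of_closed:
  assumes "component_of E A K" "u \<in> K" "x \<in> A" "E u x"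
  shows "x \<in> K"
  using assms unfolding component_of_def by (auto intro: rtranclp.rtrancl_into_rtrancl)

definition walk_in :: "'a set \<Rightarrow> ('a \<Rightarrow> 'a \<Rightarrow> bool) \<Rightarrow> nat \<Rightarrow> (nat \<Rightarrow> 'a) \<Rightarrow> bool" where
  "walk_in K E n g \<longleftrightarrow> 0 < n \<and> (\<forall>i<n. g i \<in> K) \<and> (\<forall>i. Suc i < n \<longrightarrow> E (g i) (g (Suc i)))"

lemma walk_in_prefix: "walk_in K E n g \<Longrightarrow> 0 < m \<Longrightarrow> m \<le> n \<Longrightarrow> walk_in K E m g"
  unfolding walk_in_def by auto

lemma walk_in_suffix: "walk_in K E n g \<Longrightarrow> k < n \<Longrightarrow> walk_in K E (n - k) (\<lambda>i. g (i + k))"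
  unfolding walk_in_def by auto

lemma walk_in_shortcut:
  assumes "walk_in K E n g" "i < j" "j < n" "E (g i) (g j)"
  shows "walk_in K E (n - (j - Suc i)) (\<lambda>m. if m \<le> i then g m else g (m + (j - Suc i)))"
  unfolding walk_in_def
proof (intro conjI allI impI)
  fix m assume m: "Suc m < n - (j - Suc i)"
  consider "Suc m \<le> i" | "m = i" | "i < m" by linarith
  then show "E (if m \<le> i then g m else g (m + (j - Suc i)))
      (if Suc m \<le> i then g (Suc m) else g (Suc m + (j - Suc i)))"
  proof cases
    case 3
    then have "Suc (m + (j - Suc i)) < n" using m by linarith
    then show ?thesis using 3 assms(1) unfolding walk_in_def by auto
  qed (use assms m in \<open>auto simp: walk_in_def\<close>)
qed (use assms in \<open>auto simp: walk_in_def\<close>)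

lemma walk_in_snoc:
  "walk_in K E n g \<Longrightarrow> E (g (n - 1)) z \<Longrightarrow> z \<in> K \<Longrightarrow> walk_in K E (Suc n) (g(n := z))"
  unfolding walk_in_def by (auto simp: less_Suc_eq)

lemma component_of_walk:
  assumes G: "graph V E" and K: "component_of E A K" and "a \<in> K" "b \<in> K"
  obtains n g where "walk_in K E n g" "g 0 = a" "g (n - 1) = b"
proof -
  define R where "R x y \<longleftrightarrow> E x y \<and> x \<in> A \<and> y \<in> A" for x y
  obtain x0 where K_eq: "K = {y \<in> A. R\<^sup>*\<^sup>* x0 y}"
    using K unfolding component_of_def R_def by blast
  have "symp R"
    unfolding R_def by (auto intro: sympI simp: graph_sym[OF G])
  then have "R\<^sup>*\<^sup>* a x0"
    using \<open>a \<in> K\<close> K_eq by (auto dest: sympD[OF symp_rtranclp])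
  then have "R\<^sup>*\<^sup>* a b"
    using \<open>b \<in> K\<close> K_eq by auto
  have "\<exists>n g. walk_in K E n g \<and> g 0 = a \<and> g (n - 1) = y" if "R\<^sup>*\<^sup>* a y" for y
    using that
  proof (induction rule: rtranclp_induct)
    case base
    then show ?case using \<open>a \<in> K\<close> by (intro exI[of _ 1] exI[of _ "\<lambda>_. a"]) (simp add: walk_in_def)
  next
    case (step y z)
    then obtain n g where g: "walk_in K E n g" "g 0 = a" "g (n - 1) = y" by blast
    have "R\<^sup>*\<^sup>* x0 z"
      using \<open>a \<in> K\<close> K_eq step.hyps by (auto intro: rtranclp_trans)
    then have "z \<in> K"
      using step.hyps(2) K_eq by (simp add: R_def)
    then have "walk_in K E (Suc n) (g(n := z))"
      using g step.hyps(2) by (intro walk_in_snoc) (auto simp: R_def)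
    moreover have "(g(n := z)) 0 = a"
      using g(1,2) by (simp add: walk_in_def)
    moreover have "(g(n := z)) (Suc n - 1) = z"
      by simp
    ultimately show ?case by blast
  qed
  then show ?thesis using \<open>R\<^sup>*\<^sup>* a b\<close> that by blast
qed

lemma shortest_walk_between:
  assumes G: "graph V E" and K: "component_of E A K"
    and "a \<in> K" "P a" "b \<in> K" "Q b"
  obtains n g where "walk_in K E n g" "P (g 0)" "Q (g (n - 1))"
    "\<And>k. 0 < k \<Longrightarrow> k < n \<Longrightarrow> \<not> P (g k)"
    "\<And>k. k < n - 1 \<Longrightarrow> \<not> Q (g k)"
    "\<And>i j. Suc i < j \<Longrightarrow> j < n \<Longrightarrow> \<not> E (g i) (g j)"
proof -
  define W where "W m h \<longleftrightarrow> walk_in K E m h \<and> P (h 0) \<and> Q (h (m - 1))" for m h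
  obtain n0 g0 where "walk_in K E n0 g0" "g0 0 = a" "g0 (n0 - 1) = b"
    using component_of_walk[OF G K \<open>a \<in> K\<close> \<open>b \<in> K\<close>] .
  then have "\<exists>m h. W m h"
    using assms(4,6) unfolding W_def by blast
  then obtain n where "\<exists>h. W n h" and shortest: "\<And>m h. m < n \<Longrightarrow> \<not> W m h"
    using exists_least_iff[of "\<lambda>m. \<exists>h. W m h"] by blast
  then obtain g where g: "W n g" by blast
  then have walk: "walk_in K E n g" by (simp add: W_def)
  show ?thesis
  proof (rule that[OF walk])
    show "P (g 0)" "Q (g (n - 1))" using g by (auto simp: W_def)
  next
    fix k assume "0 < k" "k < n"
    then show "\<not> P (g k)"
      using shortest[of "n - k" "\<lambda>i. g (i + k)"] walk_in_suffix[OF walk] g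
      by (auto simp: W_def)
  next
    fix k assume "k < n - 1"
    then show "\<not> Q (g k)"
      using shortest[of "Suc k" g] walk_in_prefix[OF walk] g by (auto simp: W_def)
  next
    fix i j assume ij: "Suc i < j" "j < n"
    show "\<not> E (g i) (g j)"
    proof
      assume "E (g i) (g j)"
      let ?d = "j - Suc i"
      have "W (n - ?d) (\<lambda>m. if m \<le> i then g m else g (m + ?d))"
        using walk_in_shortcut[OF walk _ ij(2) \<open>E (g i) (g j)\<close>] ij g
        by (auto simp: W_def)
      then show False using shortest ij by simp
    qed
  qed
qed

lemma walk_in_chordless_adj:
  assumes G: "graph V E" and walk: "walk_in K E n g"
    and chordless: "\<And>i j. Suc i < j \<Longrightarrow> j < n \<Longrightarrow> \<not> E (g i) (g j)"
    and "i < n" "j < n"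
  shows "E (g i) (g j) \<longleftrightarrow> j = i + 1 \<or> i = j + 1"
proof (cases "Suc i < j \<or> Suc j < i")
  case True
  then show ?thesis using chordless assms(4,5) graph_sym[OF G] by auto
next
  case False
  then consider "j = i" | "j = Suc i" | "i = Suc j" by linarith
  then show ?thesis
    using walk assms(4,5) graph_irrefl[OF G] graph_sym[OF G] unfolding walk_in_def by cases auto
qed

lemma component_of_induced_path:
  assumes G: "graph V E" and K: "component_of E A K"
    and "a \<in> K" "P a" "b \<in> K" "Q b"
  obtains n g where "induced_path K E n g" "0 < n" "P (g 0)" "Q (g (n - 1))"
    "\<And>k. 0 < k \<Longrightarrow> k < n \<Longrightarrow> \<not> P (g k)"
    "\<And>k. k < n - 1 \<Longrightarrow> \<not> Q (g k)"
proof -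
  obtain n g where walk: "walk_in K E n g" and ends: "P (g 0)" "Q (g (n - 1))"
    and late_P: "\<And>k. 0 < k \<Longrightarrow> k < n \<Longrightarrow> \<not> P (g k)"
    and early_Q: "\<And>k. k < n - 1 \<Longrightarrow> \<not> Q (g k)"
    and chordless: "\<And>i j. Suc i < j \<Longrightarrow> j < n \<Longrightarrow> \<not> E (g i) (g j)"
    using shortest_walk_between[where P = P and Q = Q, OF assms] by blast
  note adj = walk_in_chordless_adj[OF G walk chordless]
  have distinct: "g i \<noteq> g j" if "i < j" "j < n" for i j
  proof
    assume "g i = g j"
    \<comment> \<open>P holds only at g 0, so i > 0, and the edge from g (i - 1) to g i = g j is a chord\<close>
    have "i \<noteq> 0"
      using late_P[of j] ends(1) that \<open>g i = g j\<close> by (cases "i = 0") auto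
    then have "E (g (i - 1)) (g j)"
      using adj[of "i - 1" i] \<open>g i = g j\<close> that by simp
    moreover have "\<not> E (g (i - 1)) (g j)"
      using adj[of "i - 1" j] \<open>i \<noteq> 0\<close> that by simp
    ultimately show False by contradiction
  qed
  have "inj_on g {0..<n}"
  proof (rule inj_onI)
    fix i j assume "i \<in> {0..<n}" "j \<in> {0..<n}" "g i = g j"
    then show "i = j" using distinct[of i j] distinct[of j i] by (cases i j rule: linorder_cases) auto
  qed
  then have "induced_path K E n g"
    using walk adj unfolding induced_path_def walk_in_def by auto
  then show ?thesis using that walk ends late_P early_Q by (auto simp: walk_in_def)
qed

lemma component_of_edge_between:
  assumes G: "graph V E" and K: "component_of E A K"
    and "a \<in> K" "P a" "b \<in> K" "\<not> P b"
  obtains u w where "u \<in> K" "w \<in> K" "E u w" "P u" "\<not> P w"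
proof -
  obtain n g where g: "induced_path K E n g" "0 < n" "P (g 0)" "\<not> P (g (n - 1))"
    and late: "\<And>k. 0 < k \<Longrightarrow> k < n \<Longrightarrow> \<not> P (g k)"
    and "\<And>k. k < n - 1 \<Longrightarrow> \<not> \<not> P (g k)"
    by (rule component_of_induced_path[where P = P and Q = "\<lambda>y. \<not> P y", OF assms]) blast
  have "n \<noteq> 1"
    using g(3,4) by (cases "n = 1") auto
  then have "1 < n"
    using g(2) by linarith
  then have "g 0 \<in> K" "g 1 \<in> K" "E (g 0) (g 1)"
    using g(1) unfolding induced_path_def by auto
  then show ?thesis
    using that g(3) late[of 1] \<open>1 < n\<close> by simp
qed

locale C5_and_component =
  fixes V :: "'a set" and E :: "'a \<Rightarrow> 'a \<Rightarrow> bool" and c :: "nat \<Rightarrow> 'a" and K :: "'a set"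
  assumes graph: "graph V E"
    and no_P7: "\<not> (\<exists>f. induced_path V E 7 f)"
    and no_C4: "\<not> (\<exists>f. induced_cycle V E 4 f)"
    and no_C6: "\<not> (\<exists>f. induced_cycle V E 6 f)"
    and no_C7: "\<not> (\<exists>f. induced_cycle V E 7 f)"
    and C5: "induced_cycle V E 5 c"
    and component: "component_of E (Sset V E (c ` {0..<5}) {}) K"
begin

definition C :: "'a set" where
  "C = c ` {0..<5}"

abbreviation "S \<equiv> Sset V E C"
abbreviation "NK \<equiv> nbhd V E K"

lemma sym: "E x y \<longleftrightarrow> E y x"
  using graph by (rule graph_sym)

lemma irrefl: "\<not> E x x"
  using graph by (rule graph_irrefl)

lemma C_subset_V: "C \<subseteq> V"
  using C5 unfolding induced_cycle_def C_def by blast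

lemma K_subset_S0: "K \<subseteq> S {}"
  using component_of_subset[OF component] unfolding C_def .

lemma K_in_V_minus_C: "u \<in> K \<Longrightarrow> u \<in> V - C"
  using K_subset_S0 unfolding Sset_def by blast

lemma K_anticomplete_C:
  assumes "u \<in> K" "a \<in> C" shows "\<not> E u a" "\<not> E a u"
  using K_subset_S0 sym assms unfolding Sset_def by blast+

lemma NK_has_K_neighbour: "x \<in> NK \<Longrightarrow> \<exists>u\<in>K. E x u"
  unfolding nbhd_def by blast

lemma NK_in_V_minus_C: "x \<in> NK \<Longrightarrow> x \<in> V - C"
  using K_anticomplete_C unfolding nbhd_def by (blast dest: sym[THEN iffD1])

lemma NK_has_C_neighbour:
  assumes "x \<in> NK" shows "\<exists>a\<in>C. E x a"
proof (rule ccontr)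
  assume "\<not> (\<exists>a\<in>C. E x a)"
  then have "x \<in> S {}"
    using NK_in_V_minus_C[OF assms] unfolding Sset_def by auto
  moreover obtain u where "u \<in> K" "E u x"
    using NK_has_K_neighbour[OF assms] sym by blast
  ultimately have "x \<in> K"
    using component_of_closed[OF component] unfolding C_def by blast
  with assms show False unfolding nbhd_def by blast
qed

section \<open>Labellings of the five-cycle\<close>

text \<open>
  Each forbidden
  configuration below is stated once for an arbitrary labelling and then used at all ten
  labellings obtained from one of them, which replaces arithmetic modulo 5.
\<close>

definition C_labelling :: "'a \<Rightarrow> 'a \<Rightarrow> 'a \<Rightarrow> 'a \<Rightarrow> 'a \<Rightarrow> bool" where
  "C_labelling a0 a1 a2 a3 a4 \<longleftrightarrow> {a0, a1, a2, a3, a4} = C \<and> distinct [a0, a1, a2, a3, a4]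
     \<and> E a0 a1 \<and> E a1 a2 \<and> E a2 a3 \<and> E a3 a4 \<and> E a4 a0
     \<and> \<not> E a0 a2 \<and> \<not> E a0 a3 \<and> \<not> E a1 a3 \<and> \<not> E a1 a4 \<and> \<not> E a2 a4"

lemma C_labellingD:
  assumes "C_labelling a0 a1 a2 a3 a4"
  shows "a0 \<in> C" "a1 \<in> C" "a2 \<in> C" "a3 \<in> C" "a4 \<in> C" "distinct [a0, a1, a2, a3, a4]"
    "E a0 a1" "E a1 a2" "E a2 a3" "E a3 a4" "E a4 a0"
    "\<not> E a0 a2" "\<not> E a0 a3" "\<not> E a1 a3" "\<not> E a1 a4" "\<not> E a2 a4"
  using assms unfolding C_labelling_def by blast+

lemma C_labelling_rotate: "C_labelling a0 a1 a2 a3 a4 \<Longrightarrow> C_labelling a1 a2 a3 a4 a0"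
  unfolding C_labelling_def by (auto simp: sym)

lemma C_labelling_reflect: "C_labelling a0 a1 a2 a3 a4 \<Longrightarrow> C_labelling a4 a3 a2 a1 a0"
  unfolding C_labelling_def by (auto simp: sym)

lemma C_labelling_symmetries:
  assumes "C_labelling a0 a1 a2 a3 a4"
  shows "C_labelling a0 a1 a2 a3 a4" "C_labelling a1 a2 a3 a4 a0" "C_labelling a2 a3 a4 a0 a1"
    "C_labelling a3 a4 a0 a1 a2" "C_labelling a4 a0 a1 a2 a3" "C_labelling a4 a3 a2 a1 a0"
    "C_labelling a3 a2 a1 a0 a4" "C_labelling a2 a1 a0 a4 a3" "C_labelling a1 a0 a4 a3 a2"
    "C_labelling a0 a4 a3 a2 a1"
  using assms by (meson C_labelling_rotate C_labelling_reflect)+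

lemma C_labelling_c: "C_labelling (c 0) (c 1) (c 2) (c 3) (c 4)"
proof -
  have "{0..<5} = {0, 1, 2, 3, 4::nat}" by auto
  moreover have "E (c i) (c j) \<longleftrightarrow> j = (i + 1) mod 5 \<or> i = (j + 1) mod 5" if "i < 5" "j < 5" for i j
    using C5 that unfolding induced_cycle_def by blast
  moreover have "inj_on c {0..<5}"
    using C5 unfolding induced_cycle_def by blast
  ultimately show ?thesis
    unfolding C_labelling_def C_def by (simp add: inj_on_def)
qed

lemma C_labelling_neighbours:
  assumes "C_labelling a0 a1 a2 a3 a4" "u \<in> C" "E a0 u"
  shows "u = a1 \<or> u = a4"
proof -
  have "u \<in> {a0, a1, a2, a3, a4}" "\<not> E a0 a2" "\<not> E a0 a3"
    using assms(1,2) unfolding C_labelling_def by auto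
  then show ?thesis
    using assms(3) irrefl by auto
qed

lemma C_labelling_unique:
  assumes a: "C_labelling a0 a1 a2 a3 a4" and b: "C_labelling a0 b1 b2 b3 b4"
  shows "(b1, b2, b3, b4) = (a1, a2, a3, a4) \<or> (b1, b2, b3, b4) = (a4, a3, a2, a1)"
proof -
  have in_C: "b1 \<in> C" "b2 \<in> C" "b3 \<in> C" "b4 \<in> C"
    and path: "E a0 b1" "E b1 b2" "E b2 b3" "E b3 b4"
    and distinct: "b2 \<noteq> a0" "b3 \<noteq> b1" "b4 \<noteq> b2"
    using b unfolding C_labelling_def by auto
  note nbrs = C_labelling_symmetries[OF a, THEN C_labelling_neighbours]
  have "b1 = a1 \<or> b1 = a4"
    using nbrs(1) in_C path by blast
  then show ?thesis
  proof
    assume "b1 = a1"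
    then have "b2 = a2" using nbrs(2) in_C path distinct by blast
    then have "b3 = a3" using nbrs(3) in_C path distinct \<open>b1 = a1\<close> by blast
    then have "b4 = a4" using nbrs(4) in_C path distinct \<open>b2 = a2\<close> by blast
    then show ?thesis using \<open>b1 = a1\<close> \<open>b2 = a2\<close> \<open>b3 = a3\<close> by simp
  next
    assume "b1 = a4"
    then have "b2 = a3" using nbrs(6) in_C path distinct by blast
    then have "b3 = a2" using nbrs(7) in_C path distinct \<open>b1 = a4\<close> by blast
    then have "b4 = a1" using nbrs(8) in_C path distinct \<open>b2 = a3\<close> by blast
    then show ?thesis using \<open>b1 = a4\<close> \<open>b2 = a3\<close> \<open>b3 = a2\<close> by simp
  qed
qed

definition cyc :: "nat \<Rightarrow> 'a" where
  "cyc i = c (i mod 5)"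

lemma C_labelling_cyc: "C_labelling (cyc i) (cyc (i + 1)) (cyc (i + 2)) (cyc (i + 3)) (cyc (i + 4))"
proof (induction i)
  case 0
  have "cyc 0 = c 0" "cyc (0 + 1) = c 1" "cyc (0 + 2) = c 2" "cyc (0 + 3) = c 3" "cyc (0 + 4) = c 4"
    by (simp_all add: cyc_def numeral_2_eq_2)
  then show ?case using C_labelling_c by (simp only:)
next
  case (Suc i)
  have "cyc (Suc i) = cyc (i + 1)" "cyc (Suc i + 1) = cyc (i + 2)" "cyc (Suc i + 2) = cyc (i + 3)"
    "cyc (Suc i + 3) = cyc (i + 4)" "cyc (Suc i + 4) = cyc i"
    by (simp_all add: cyc_def add.commute)
  then show ?case using C_labelling_rotate[OF Suc.IH] by (simp only:)
qed

lemma C_labelling_cases: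
  assumes "C_labelling b0 b1 b2 b3 b4"
  obtains i where "(b0, b1, b2, b3, b4) = (cyc i, cyc (i + 1), cyc (i + 2), cyc (i + 3), cyc (i + 4))"
    | i where "(b0, b1, b2, b3, b4) = (cyc i, cyc (i + 4), cyc (i + 3), cyc (i + 2), cyc (i + 1))"
proof -
  have "b0 \<in> C"
    using assms unfolding C_labelling_def by blast
  then obtain i where "b0 = c i" "i < 5" unfolding C_def by auto
  then have b0: "b0 = cyc i" by (simp add: cyc_def)
  with assms have "C_labelling (cyc i) b1 b2 b3 b4" by simp
  from C_labelling_unique[OF C_labelling_cyc this] show ?thesis
  proof
    assume "(b1, b2, b3, b4) = (cyc (i + 1), cyc (i + 2), cyc (i + 3), cyc (i + 4))"
    then show ?thesis using that(1)[of i] b0 by simp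
  next
    assume "(b1, b2, b3, b4) = (cyc (i + 4), cyc (i + 3), cyc (i + 2), cyc (i + 1))"
    then show ?thesis using that(2)[of i] b0 by simp
  qed
qed

lemma C_labelling_NK_neighbour:
  assumes "C_labelling a0 a1 a2 a3 a4" "x \<in> NK"
  shows "E x a0 \<or> E x a1 \<or> E x a2 \<or> E x a3 \<or> E x a4"
proof -
  obtain a where "a \<in> C" "E x a"
    using NK_has_C_neighbour[OF assms(2)] by blast
  moreover have "C = {a0, a1, a2, a3, a4}"
    using assms(1) unfolding C_labelling_def by simp
  ultimately show ?thesis by auto
qed

lemma C_labelling_mem_S_adj:
  assumes "C_labelling a0 a1 a2 a3 a4" "x \<in> S X"
  shows "(E x a0 \<longleftrightarrow> a0 \<in> X) \<and> (E x a1 \<longleftrightarrow> a1 \<in> X) \<and> (E x a2 \<longleftrightarrow> a2 \<in> X)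
    \<and> (E x a3 \<longleftrightarrow> a3 \<in> X) \<and> (E x a4 \<longleftrightarrow> a4 \<in> X)"
  using assms C_labellingD(1-5)[OF assms(1)] unfolding Sset_def by blast

lemma C_labelling_mem_S_iff:
  assumes "C_labelling a0 a1 a2 a3 a4" "X \<subseteq> {a0, a1, a2, a3, a4}"
  shows "x \<in> S X \<longleftrightarrow> x \<in> V - C \<and> (\<forall>a\<in>{a0, a1, a2, a3, a4}. E x a \<longleftrightarrow> a \<in> X)"
proof -
  have "C = {a0, a1, a2, a3, a4}"
    using assms(1) unfolding C_labelling_def by simp
  then show ?thesis
    using assms(2) unfolding Sset_def by auto
qed

section \<open>Forbidden configurations around C\<close>

lemma no_C4_through_gap:
  assumes lab: "C_labelling a0 a1 a2 a3 a4" and "x \<in> V - C"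
  shows "\<not> (E x a0 \<and> \<not> E x a1 \<and> E x a2)"
proof
  assume "E x a0 \<and> \<not> E x a1 \<and> E x a2"
  then have "\<exists>f. induced_cycle V E 4 f"
    using C_labellingD[OF lab] C_subset_V assms(2)
    by (intro induced_cycle_4I[OF graph, of x a0 a1 a2]) (auto simp: sym)
  with no_C4 show False ..
qed

lemma no_C4_across:
  assumes lab: "C_labelling a0 a1 a2 a3 a4" and "p \<in> V" "q \<in> V" "p \<noteq> q" "\<not> E p q"
  shows "\<not> (E p a0 \<and> E q a0 \<and> E p a2 \<and> E q a2)"
proof
  assume "E p a0 \<and> E q a0 \<and> E p a2 \<and> E q a2"
  then have "\<exists>f. induced_cycle V E 4 f"
    using C_labellingD[OF lab] C_subset_V assms(2-)
    by (intro induced_cycle_4I[OF graph, of p a0 q a2]) (auto simp: sym)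
  with no_C4 show False ..
qed

lemma no_C4_along_edge:
  assumes lab: "C_labelling a0 a1 a2 a3 a4" and "p \<in> V - C" "q \<in> V - C" "E p q"
  shows "\<not> (E p a0 \<and> \<not> E p a1 \<and> E q a1 \<and> \<not> E q a0)"
proof
  assume "E p a0 \<and> \<not> E p a1 \<and> E q a1 \<and> \<not> E q a0"
  then have "\<exists>f. induced_cycle V E 4 f"
    using C_labellingD[OF lab] C_subset_V assms(2-)
    by (intro induced_cycle_4I[OF graph, of p q a1 a0]) (auto simp: sym)
  with no_C4 show False ..
qed

lemma no_C4_through_K:
  assumes "a \<in> C" "u \<in> K" "p \<in> V" "q \<in> V" "p \<noteq> q" "\<not> E p q" "E p u" "E q u"
  shows "\<not> (E p a \<and> E q a)"
proof
  assume "E p a \<and> E q a"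
  then have "\<exists>f. induced_cycle V E 4 f"
    using assms K_in_V_minus_C C_subset_V
    by (intro induced_cycle_4I[OF graph, of p u q a]) (auto simp: sym K_anticomplete_C)
  with no_C4 show False ..
qed

lemma no_C6_through_K:
  assumes lab: "C_labelling a0 a1 a2 a3 a4" and "u \<in> K"
    and "p \<in> V - C" "q \<in> V - C" "\<not> E p q" "E p u" "E q u"
  shows "\<not> (E p a0 \<and> \<not> E p a1 \<and> \<not> E p a2 \<and> E q a2 \<and> \<not> E q a0 \<and> \<not> E q a1)"
proof
  assume "E p a0 \<and> \<not> E p a1 \<and> \<not> E p a2 \<and> E q a2 \<and> \<not> E q a0 \<and> \<not> E q a1"
  then have "\<exists>f. induced_cycle V E 6 f"
    using C_labellingD[OF lab] assms(2-) K_in_V_minus_C C_subset_V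
    by (intro induced_cycle_6I[OF graph, of p u q a2 a1 a0]) (auto simp: sym K_anticomplete_C)
  with no_C6 show False ..
qed

lemma no_C7_through_K:
  assumes lab: "C_labelling a0 a1 a2 a3 a4" and "u \<in> K"
    and "p \<in> V - C" "q \<in> V - C" "\<not> E p q" "E p u" "E q u"
  shows "\<not> (E p a0 \<and> \<not> E p a1 \<and> \<not> E p a2 \<and> \<not> E p a3
    \<and> E q a3 \<and> \<not> E q a0 \<and> \<not> E q a1 \<and> \<not> E q a2)"
proof
  assume "E p a0 \<and> \<not> E p a1 \<and> \<not> E p a2 \<and> \<not> E p a3 \<and> E q a3 \<and> \<not> E q a0 \<and> \<not> E q a1 \<and> \<not> E q a2"
  then have "\<exists>f. induced_cycle V E 7 f"
    using C_labellingD[OF lab] assms(2-) K_in_V_minus_C C_subset_V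
    by (intro induced_cycle_7I[OF graph, of p u q a3 a2 a1 a0]) (auto simp: sym K_anticomplete_C)
  with no_C7 show False ..
qed

lemma no_P7_through_K:
  assumes lab: "C_labelling a0 a1 a2 a3 a4" and "u \<in> K"
    and "x \<in> V - C" "y \<in> V - C" "\<not> E x y" "E x u" "E y u"
  shows "\<not> (E x a0 \<and> \<not> E x a1 \<and> \<not> E x a2 \<and> \<not> E x a3
    \<and> \<not> E y a0 \<and> \<not> E y a1 \<and> \<not> E y a2 \<and> \<not> E y a3)"
proof
  assume "E x a0 \<and> \<not> E x a1 \<and> \<not> E x a2 \<and> \<not> E x a3 \<and> \<not> E y a0 \<and> \<not> E y a1 \<and> \<not> E y a2 \<and> \<not> E y a3"
  then have "\<exists>f. induced_path V E 7 f"
    using C_labellingD[OF lab] assms(2-) K_in_V_minus_C C_subset_V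
    by (intro induced_path_7I[OF graph, of y u x a0 a1 a2 a3]) (auto simp: sym K_anticomplete_C)
  with no_P7 show False ..
qed

lemma no_P7_leaving_K:
  assumes lab: "C_labelling a0 a1 a2 a3 a4" and K: "u \<in> K" "w \<in> K" "E u w"
    and x: "x \<in> V - C" "E x u" "\<not> E x w"
  shows "\<not> (E x a0 \<and> \<not> E x a1 \<and> \<not> E x a2 \<and> \<not> E x a3)"
  using no_P7_through_K[OF lab K(1) x(1) K_in_V_minus_C[OF K(2)] x(3,2)]
    K_anticomplete_C[OF K(2)] C_labellingD[OF lab] sym K(3)
  by blast

lemma no_C6_along_K_path2:
  assumes lab: "C_labelling a0 a1 a2 a3 a4" and "x0 \<in> K" "x1 \<in> K" "E x0 x1"
    and "p \<in> V - C" "q \<in> V - C" "\<not> E p q" "E p x0" "E q x1" "\<not> E p x1" "\<not> E q x0"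
  shows "\<not> (E q a0 \<and> \<not> E q a1 \<and> E p a1 \<and> \<not> E p a0)"
proof
  assume "E q a0 \<and> \<not> E q a1 \<and> E p a1 \<and> \<not> E p a0"
  then have "\<exists>f. induced_cycle V E 6 f"
    using C_labellingD[OF lab] assms(2-) K_in_V_minus_C C_subset_V
    by (intro induced_cycle_6I[OF graph, of p x0 x1 q a0 a1]) (auto simp: sym K_anticomplete_C)
  with no_C6 show False ..
qed

lemma no_C7_along_K_path2:
  assumes lab: "C_labelling a0 a1 a2 a3 a4" and "x0 \<in> K" "x1 \<in> K" "E x0 x1"
    and "p \<in> V - C" "q \<in> V - C" "\<not> E p q" "E p x0" "E q x1" "\<not> E p x1" "\<not> E q x0"
  shows "\<not> (E q a0 \<and> \<not> E q a1 \<and> \<not> E q a2 \<and> E p a2 \<and> \<not> E p a0 \<and> \<not> E p a1)"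
proof
  assume "E q a0 \<and> \<not> E q a1 \<and> \<not> E q a2 \<and> E p a2 \<and> \<not> E p a0 \<and> \<not> E p a1"
  then have "\<exists>f. induced_cycle V E 7 f"
    using C_labellingD[OF lab] assms(2-) K_in_V_minus_C C_subset_V
    by (intro induced_cycle_7I[OF graph, of p x0 x1 q a0 a1 a2]) (auto simp: sym K_anticomplete_C)
  with no_C7 show False ..
qed

lemma no_C6_along_K_path3:
  assumes "a \<in> C" and "x0 \<in> K" "x1 \<in> K" "x2 \<in> K" "E x0 x1" "E x1 x2" "\<not> E x0 x2"
    and "p \<in> V - C" "q \<in> V - C" "\<not> E p q" "E p x0" "E q x2"
    and "\<not> E p x1" "\<not> E p x2" "\<not> E q x0" "\<not> E q x1"
  shows "\<not> (E p a \<and> E q a)"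
proof
  assume "E p a \<and> E q a"
  then have "\<exists>f. induced_cycle V E 6 f"
    using assms K_in_V_minus_C C_subset_V
    by (intro induced_cycle_6I[OF graph, of p x0 x1 x2 q a]) (auto simp: sym K_anticomplete_C)
  with no_C6 show False ..
qed

lemma no_P7_along_K_path4:
  assumes lab: "C_labelling a0 a1 a2 a3 a4"
    and "x0 \<in> K" "x1 \<in> K" "x2 \<in> K" "x3 \<in> K" "E x0 x1" "E x1 x2" "E x2 x3"
      "\<not> E x0 x2" "\<not> E x0 x3" "\<not> E x1 x3"
    and "p \<in> V - C" "E p x0" "\<not> E p x1" "\<not> E p x2" "\<not> E p x3"
  shows "\<not> (E p a0 \<and> \<not> E p a1)"
proof
  assume "E p a0 \<and> \<not> E p a1"
  then have "\<exists>f. induced_path V E 7 f"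
    using C_labellingD[OF lab] assms(2-) K_in_V_minus_C C_subset_V
    by (intro induced_path_7I[OF graph, of a1 a0 p x0 x1 x2 x3]) (auto simp: sym K_anticomplete_C)
  with no_P7 show False ..
qed

section \<open>The neighbourhood of K\<close>

text \<open>
  In the proofs below, the forbidden configurations instantiated at all ten labellings of C are
  propositional constraints on the adjacencies of p and q to C; sat checks that they leave no
  pattern, or only the stated ones.
\<close>

lemma NK_pair_not_joined_by_K_edge:
  assumes p: "p \<in> NK" and q: "q \<in> NK" and pq: "p \<noteq> q" "\<not> E p q"
    and K: "x0 \<in> K" "x1 \<in> K" "E x0 x1"
    and path: "E p x0" "E q x1" "\<not> E p x1" "\<not> E q x0"
  shows False
proof -
  note lab = C_labelling_c and labs = C_labelling_symmetries[OF C_labelling_c]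
  have pV: "p \<in> V - C" "p \<in> V" and qV: "q \<in> V - C" "q \<in> V"
    using NK_in_V_minus_C p q by auto
  have qp: "\<not> E q p" and K': "E x1 x0"
    using pq K sym by auto
  note
    labs[THEN no_C4_through_gap, OF pV(1)] labs[THEN no_C4_through_gap, OF qV(1)]
    labs[THEN no_C4_across, OF pV(2) qV(2) pq]
    labs[THEN no_P7_leaving_K, OF K pV(1) path(1,3)]
    labs[THEN no_P7_leaving_K, OF K(2,1) K' qV(1) path(2,4)]
    labs[THEN no_C6_along_K_path2, OF K pV(1) qV(1) pq(2) path]
    labs[THEN no_C7_along_K_path2, OF K pV(1) qV(1) pq(2) path]
    labs[THEN no_C6_along_K_path2, OF K(2,1) K' qV(1) pV(1) qp path(2,1,4,3)]
    labs[THEN no_C7_along_K_path2, OF K(2,1) K' qV(1) pV(1) qp path(2,1,4,3)]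
    C_labelling_NK_neighbour[OF lab p] C_labelling_NK_neighbour[OF lab q]
  then show False by sat
qed

lemma NK_pair_not_joined_by_K_path3:
  assumes p: "p \<in> NK" and q: "q \<in> NK" and pq: "p \<noteq> q" "\<not> E p q"
    and K: "x0 \<in> K" "x1 \<in> K" "x2 \<in> K" "E x0 x1" "E x1 x2" "\<not> E x0 x2"
    and path: "E p x0" "E q x2" "\<not> E p x1" "\<not> E p x2" "\<not> E q x0" "\<not> E q x1"
  shows False
proof -
  note lab = C_labelling_c and labs = C_labelling_symmetries[OF C_labelling_c]
  have pV: "p \<in> V - C" and qV: "q \<in> V - C"
    using NK_in_V_minus_C p q by auto
  have K': "E x2 x1"
    using K sym by auto
  note
    labs[THEN no_C4_through_gap, OF pV] labs[THEN no_C4_through_gap, OF qV]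
    labs[THEN no_P7_leaving_K, OF K(1,2,4) pV path(1,3)]
    labs[THEN no_P7_leaving_K, OF K(3,2) K' qV path(2,6)]
    C_labellingD(1-5)[OF lab, THEN no_C6_along_K_path3, OF K pV qV pq(2) path]
    C_labelling_NK_neighbour[OF lab p] C_labelling_NK_neighbour[OF lab q]
  then show False by sat
qed

lemma NK_pair_not_joined_by_long_K_path:
  assumes p: "p \<in> NK" and q: "q \<in> NK" and pq: "p \<noteq> q" "\<not> E p q"
    and K: "x0 \<in> K" "x1 \<in> K" "x2 \<in> K" "x3 \<in> K" "E x0 x1" "E x1 x2" "E x2 x3"
      "\<not> E x0 x2" "\<not> E x0 x3" "\<not> E x1 x3"
    and p_path: "E p x0" "\<not> E p x1" "\<not> E p x2" "\<not> E p x3"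
    and q_edge: "w \<in> K" "w' \<in> K" "E w w'" "E q w" "\<not> E q w'"
  shows False
proof -
  note lab = C_labelling_c and labs = C_labelling_symmetries[OF C_labelling_c]
  have pV: "p \<in> V - C" "p \<in> V" and qV: "q \<in> V - C" "q \<in> V"
    using NK_in_V_minus_C p q by auto
  note
    labs[THEN no_P7_along_K_path4, OF K pV(1) p_path]
    labs[THEN no_C4_through_gap, OF qV(1)]
    labs[THEN no_P7_leaving_K, OF q_edge(1-3) qV(1) q_edge(4,5)]
    labs[THEN no_C4_across, OF pV(2) qV(2) pq]
    C_labelling_NK_neighbour[OF lab p] C_labelling_NK_neighbour[OF lab q]
  then show False by sat
qed

lemma NK_common_K_neighbour:
  assumes p: "p \<in> NK" and q: "q \<in> NK" and pq: "p \<noteq> q" "\<not> E p q"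
  shows "\<exists>u\<in>K. E p u \<and> E q u"
proof (rule ccontr)
  assume none: "\<not> (\<exists>u\<in>K. E p u \<and> E q u)"
  obtain a b where "a \<in> K" "E p a" "b \<in> K" "E q b"
    using NK_has_K_neighbour p q by blast
  then obtain n g where g: "induced_path K E n g" "0 < n" "E p (g 0)" "E q (g (n - 1))"
    and late: "\<And>k. 0 < k \<Longrightarrow> k < n \<Longrightarrow> \<not> E p (g k)"
    and early: "\<And>k. k < n - 1 \<Longrightarrow> \<not> E q (g k)"
    using component_of_induced_path[OF graph component, where P = "E p" and Q = "E q"] by blast
  have gK: "\<And>k. k < n \<Longrightarrow> g k \<in> K"
    and adj: "\<And>i j. i < n \<Longrightarrow> j < n \<Longrightarrow> E (g i) (g j) \<longleftrightarrow> j = i + 1 \<or> i = j + 1"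
    using g(1) unfolding induced_path_def by auto
  have "n \<noteq> 1"
    using none g gK by force
  then consider "n = 2" | "n = 3" | "4 \<le> n"
    using g(2) by linarith
  then show False
  proof cases
    case 1
    then show False
      using NK_pair_not_joined_by_K_edge[OF p q pq, of "g 0" "g 1"] gK adj[of 0 1] g late[of 1] early[of 0]
      by simp
  next
    case 2
    then show False
      using NK_pair_not_joined_by_K_path3[OF p q pq, of "g 0" "g 1" "g 2"] gK adj g late early
      by (simp add: numeral_eq_Suc)
  next
    case 3
    have "E (g (n - 1)) (g (n - 2))" "\<not> E q (g (n - 2))"
      using adj[of "n - 1" "n - 2"] early[of "n - 2"] 3 by auto
    then show False
      using NK_pair_not_joined_by_long_K_path[OF p q pq, of "g 0" "g 1" "g 2" "g 3" "g (n - 1)" "g (n - 2)"]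
        gK adj g late 3 by (simp add: numeral_eq_Suc)
  qed
qed

lemma NK_adjacent_if_common_C_neighbour:
  assumes p: "p \<in> NK" and q: "q \<in> NK" and "p \<noteq> q" "a \<in> C" "E p a" "E q a"
  shows "E p q"
proof (rule ccontr)
  assume "\<not> E p q"
  then obtain u where "u \<in> K" "E p u" "E q u"
    using NK_common_K_neighbour[OF p q \<open>p \<noteq> q\<close>] by blast
  moreover have "p \<in> V" "q \<in> V"
    using NK_in_V_minus_C p q by auto
  ultimately show False
    using no_C4_through_K[OF \<open>a \<in> C\<close>] assms \<open>\<not> E p q\<close> by blast
qed

lemma NK_nonadjacent_split_at:
  assumes lab: "C_labelling a0 a1 a2 a3 a4"
    and p: "p \<in> NK" and q: "q \<in> NK" and pq: "p \<noteq> q" "\<not> E p q" and "E p a0" "\<not> E p a4"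
  shows "(p \<in> S {a0, a1, a2} \<and> q \<in> S {a3, a4}) \<or> (p \<in> S {a0, a1} \<and> q \<in> S {a2, a3, a4})"
proof -
  obtain u where u: "u \<in> K" "E p u" "E q u"
    using NK_common_K_neighbour[OF p q pq] by blast
  note labs = C_labelling_symmetries[OF lab]
  have pV: "p \<in> V - C" "p \<in> V" and qV: "q \<in> V - C" "q \<in> V"
    using NK_in_V_minus_C p q by auto
  have qp: "\<not> E q p"
    using pq sym by auto
  note
    labs[THEN no_C4_through_gap, OF pV(1)] labs[THEN no_C4_through_gap, OF qV(1)]
    C_labellingD(1-5)[OF lab, THEN no_C4_through_K, OF u(1) pV(2) qV(2) pq u(2,3)]
    labs[THEN no_C6_through_K, OF u(1) pV(1) qV(1) pq(2) u(2,3)]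
    labs[THEN no_C6_through_K, OF u(1) qV(1) pV(1) qp u(3,2)]
    labs[THEN no_C7_through_K, OF u(1) pV(1) qV(1) pq(2) u(2,3)]
    labs[THEN no_C7_through_K, OF u(1) qV(1) pV(1) qp u(3,2)]
    labs[THEN no_P7_through_K, OF u(1) pV(1) qV(1) pq(2) u(2,3)]
    labs[THEN no_P7_through_K, OF u(1) qV(1) pV(1) qp u(3,2)]
    C_labelling_NK_neighbour[OF lab q] \<open>E p a0\<close> \<open>\<not> E p a4\<close>
  then have "(E p a1 \<and> E p a2 \<and> \<not> E p a3 \<and> \<not> E q a0 \<and> \<not> E q a1 \<and> \<not> E q a2 \<and> E q a3 \<and> E q a4)
    \<or> (E p a1 \<and> \<not> E p a2 \<and> \<not> E p a3 \<and> \<not> E q a0 \<and> \<not> E q a1 \<and> E q a2 \<and> E q a3 \<and> E q a4)"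
    by sat
  then show ?thesis
    using pV(1) qV(1) \<open>E p a0\<close> \<open>\<not> E p a4\<close> C_labellingD(6)[OF lab]
    by (auto simp: C_labelling_mem_S_iff[OF lab])
qed

lemma C_labelling_entering:
  assumes "a \<in> C" "E x a" "b \<in> C" "\<not> E x b"
  obtains a0 a1 a2 a3 a4 where "C_labelling a0 a1 a2 a3 a4" "E x a0" "\<not> E x a4"
proof -
  have "C = {c 0, c 1, c 2, c 3, c 4}"
    using C_labelling_c unfolding C_labelling_def by simp
  then have "(E x (c 0) \<and> \<not> E x (c 4)) \<or> (E x (c 1) \<and> \<not> E x (c 0)) \<or> (E x (c 2) \<and> \<not> E x (c 1))
      \<or> (E x (c 3) \<and> \<not> E x (c 2)) \<or> (E x (c 4) \<and> \<not> E x (c 3))"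
    using assms by auto
  then show ?thesis
    using C_labelling_symmetries(1-5)[OF C_labelling_c] that by blast
qed

lemma NK_nonadjacent_split:
  assumes p: "p \<in> NK" and q: "q \<in> NK" and pq: "p \<noteq> q" "\<not> E p q"
  shows "\<exists>b0 b1 b2 b3 b4. C_labelling b0 b1 b2 b3 b4
    \<and> ((p \<in> S {b4, b0, b1} \<and> q \<in> S {b3, b2}) \<or> (q \<in> S {b4, b0, b1} \<and> p \<in> S {b3, b2}))"
proof -
  obtain a b where "a \<in> C" "E p a" "b \<in> C" "E q b"
    using NK_has_C_neighbour p q by blast
  moreover have "\<not> E p b"
    using NK_adjacent_if_common_C_neighbour[OF p q pq(1) \<open>b \<in> C\<close>] \<open>E q b\<close> pq(2) by blast
  ultimately obtain a0 a1 a2 a3 a4 where lab: "C_labelling a0 a1 a2 a3 a4" "E p a0" "\<not> E p a4"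
    using C_labelling_entering by blast
  from NK_nonadjacent_split_at[OF lab(1) p q pq lab(2,3)] show ?thesis
  proof
    assume "p \<in> S {a0, a1, a2} \<and> q \<in> S {a3, a4}"
    moreover have "{a3, a4} = {a4, a3}" by auto
    ultimately have "p \<in> S {a0, a1, a2} \<and> q \<in> S {a4, a3}" by simp
    then show ?thesis
      using C_labelling_symmetries(2)[OF lab(1)] by blast
  next
    assume "p \<in> S {a0, a1} \<and> q \<in> S {a2, a3, a4}"
    moreover have "{a0, a1} = {a1, a0}" by auto
    ultimately have "q \<in> S {a2, a3, a4} \<and> p \<in> S {a1, a0}" by simp
    then show ?thesis
      using C_labelling_symmetries(4)[OF lab(1)] by blast
  qed
qed

lemma NK_nonadjacent_split_cyc:
  assumes "p \<in> NK" "q \<in> NK" "p \<noteq> q" "\<not> E p q"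
  shows "\<exists>i. (p \<in> S {cyc (i + 4), cyc i, cyc (i + 1)} \<and> q \<in> S {cyc (i + 3), cyc (i + 2)})
    \<or> (q \<in> S {cyc (i + 4), cyc i, cyc (i + 1)} \<and> p \<in> S {cyc (i + 3), cyc (i + 2)})"
proof -
  obtain b0 b1 b2 b3 b4 where b: "C_labelling b0 b1 b2 b3 b4"
    "(p \<in> S {b4, b0, b1} \<and> q \<in> S {b3, b2}) \<or> (q \<in> S {b4, b0, b1} \<and> p \<in> S {b3, b2})"
    using NK_nonadjacent_split[OF assms] by blast
  from C_labelling_cases[OF b(1)] show ?thesis
  proof cases
    case (1 i)
    then show ?thesis using b(2) by blast
  next
    case (2 i)
    have "{cyc (i + 1), cyc i, cyc (i + 4)} = {cyc (i + 4), cyc i, cyc (i + 1)}"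
      "{cyc (i + 2), cyc (i + 3)} = {cyc (i + 3), cyc (i + 2)}"
      by auto
    then show ?thesis using 2 b(2) by auto
  qed
qed

lemma NK_not_complete_K_edge:
  assumes x: "x \<in> NK" and "u \<in> K" "\<not> E x u"
  obtains w w' where "w \<in> K" "w' \<in> K" "E w w'" "E x w" "\<not> E x w'"
proof -
  obtain u0 where "u0 \<in> K" "E x u0"
    using NK_has_K_neighbour[OF x] by blast
  from component_of_edge_between[where P = "E x", OF graph component this assms(2,3)] that
  show ?thesis by blast
qed

lemma NK_complete_to_K_if_two_C_neighbours:
  assumes lab: "C_labelling a0 a1 a2 a3 a4" and x: "x \<in> NK" "x \<in> S {a3, a2}" and "u \<in> K"
  shows "E x u"
proof (rule ccontr)
  assume "\<not> E x u"
  then obtain w w' where w: "w \<in> K" "w' \<in> K" "E w w'" "E x w" "\<not> E x w'"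
    using NK_not_complete_K_edge[OF x(1) \<open>u \<in> K\<close>] by blast
  have "E x a3" "\<not> E x a4" "\<not> E x a0" "\<not> E x a1"
    using C_labelling_mem_S_adj[OF lab x(2)] C_labellingD(6)[OF lab] by auto
  then show False
    using no_P7_leaving_K[OF C_labelling_symmetries(4)[OF lab] w(1-3) NK_in_V_minus_C[OF x(1)] w(4,5)]
    by blast
qed

lemma NK_no_overlapping_triples:
  assumes lab: "C_labelling a0 a1 a2 a3 a4"
  shows "NK \<inter> S {a4, a0, a1} = {} \<or> NK \<inter> S {a1, a2, a3} = {}"
proof (rule ccontr)
  assume "\<not> ?thesis"
  then obtain p q where p: "p \<in> NK" "p \<in> S {a4, a0, a1}" and q: "q \<in> NK" "q \<in> S {a1, a2, a3}"
    by blast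
  have "E p a4" "E p a1" "\<not> E p a3" "E q a3" "E q a1" "\<not> E q a4"
    using C_labelling_mem_S_adj[OF lab p(2)] C_labelling_mem_S_adj[OF lab q(2)] C_labellingD(6)[OF lab]
    by auto
  moreover from this have "E p q"
    using NK_adjacent_if_common_C_neighbour[OF p(1) q(1) _ C_labellingD(2)[OF lab]] by blast
  ultimately show False
    using no_C4_along_edge[OF C_labelling_symmetries(6)[OF lab] NK_in_V_minus_C[OF p(1)]
        NK_in_V_minus_C[OF q(1)]]
    by blast
qed

lemma NK_no_crossing_quadruple:
  assumes lab: "C_labelling a0 a1 a2 a3 a4"
    and p: "p \<in> NK" "p \<in> S {a4, a0, a1}" and q: "q \<in> NK" "q \<in> S {a3, a2}"
    and p': "p' \<in> NK" "p' \<in> S {a0, a1, a2}" and q': "q' \<in> NK" "q' \<in> S {a3, a4}"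
  shows False
proof -
  have adj: "E p a4" "E p a0" "E p a1" "\<not> E p a2" "\<not> E p a3"
    "E q a3" "E q a2" "\<not> E q a0" "\<not> E q a1" "\<not> E q a4"
    "E p' a0" "E p' a1" "E p' a2" "\<not> E p' a3" "\<not> E p' a4"
    "E q' a3" "E q' a4" "\<not> E q' a0" "\<not> E q' a1" "\<not> E q' a2"
    using C_labelling_mem_S_adj[OF lab p(2)] C_labelling_mem_S_adj[OF lab q(2)]
      C_labelling_mem_S_adj[OF lab p'(2)] C_labelling_mem_S_adj[OF lab q'(2)] C_labellingD(6)[OF lab]
    by auto
  have "E p p'" "E p' q" "E q q'" "E q' p"
    using NK_adjacent_if_common_C_neighbour p(1) q(1) p'(1) q'(1) adj C_labellingD(1-5)[OF lab]
    by metis+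
  moreover have "\<not> E p q"
    using no_C4_along_edge[OF C_labelling_symmetries(2)[OF lab] NK_in_V_minus_C[OF p(1)]
        NK_in_V_minus_C[OF q(1)]] adj
    by blast
  moreover have "\<not> E p' q'"
    using no_C4_along_edge[OF C_labelling_symmetries(3)[OF lab] NK_in_V_minus_C[OF p'(1)]
        NK_in_V_minus_C[OF q'(1)]] adj
    by blast
  moreover have "p \<noteq> q" "p' \<noteq> q'"
    using adj by auto
  ultimately have "\<exists>f. induced_cycle V E 4 f"
    using NK_in_V_minus_C p(1) p'(1) q(1) q'(1)
    by (intro induced_cycle_4I[OF graph, of p p' q q']) (auto simp: sym)
  with no_C4 show False ..
qed

end

theorem lemma9p1:
  fixes V :: "'a set" and E :: "'a \<Rightarrow> 'a \<Rightarrow> bool" and c :: "nat \<Rightarrow> 'a" and K :: "'a set"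
  assumes G: "graph V E"
    and noP7: "\<not> (\<exists>f. induced_path V E 7 f)"
    and noC4: "\<not> (\<exists>f. induced_cycle V E 4 f)"
    and noC6: "\<not> (\<exists>f. induced_cycle V E 6 f)"
    and noC7: "\<not> (\<exists>f. induced_cycle V E 7 f)"
    and C5: "induced_cycle V E 5 c"
    and K: "component_of E (Sset V E (c ` {0..<5}) {}) K"
    and notclique: "\<not> is_clique E K"
  defines "v \<equiv> (\<lambda>i. c (i mod 5))"
    and "S \<equiv> Sset V E (c ` {0..<5})"
    and "NK \<equiv> nbhd V E K"
  shows
    "(\<forall>i. \<forall>x \<in> NK \<inter> S {v (i+3), v (i+2)}. \<forall>u\<in>K. E x u)
   \<and> (\<forall>i. NK \<inter> S {v (i+4), v i, v (i+1)} = {} \<or> NK \<inter> S {v (i+1), v (i+2), v (i+3)} = {})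
   \<and> (\<forall>p\<in>NK. \<forall>q\<in>NK. p \<noteq> q \<and> \<not> E p q \<longrightarrow>
        (\<exists>i. (p \<in> S {v (i+4), v i, v (i+1)} \<and> q \<in> S {v (i+3), v (i+2)})
           \<or> (q \<in> S {v (i+4), v i, v (i+1)} \<and> p \<in> S {v (i+3), v (i+2)})))
   \<and> \<not> (\<exists>i p p' q q'. p \<in> NK \<and> p' \<in> NK \<and> q \<in> NK \<and> q' \<in> NK
        \<and> p \<in> S {v (i+4), v i, v (i+1)} \<and> q \<in> S {v (i+3), v (i+2)}
        \<and> p' \<in> S {v i, v (i+1), v (i+2)} \<and> q' \<in> S {v (i+3), v (i+4)})"
proof -
  interpret L: C5_and_component V E c K
    using G noP7 noC4 noC6 noC7 C5 K by unfold_locales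
  have S_eq: "S = Sset V E L.C"
    unfolding S_def L.C_def ..
  have v_eq: "v = L.cyc"
    unfolding v_def L.cyc_def[abs_def] ..
  note lab = L.C_labelling_cyc
  show ?thesis
    unfolding NK_def S_eq v_eq
    using L.NK_complete_to_K_if_two_C_neighbours[OF lab] L.NK_no_overlapping_triples[OF lab]
      L.NK_nonadjacent_split_cyc L.NK_no_crossing_quadruple[OF lab]
    by blast
qed

end
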